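(* Let $R$ be a $u$-ring, let $n$ be a positive integer and let $I$ be a proper ideal of $R$. Then the following conditions are equivalent: (a) $I$ is a strongly weakly $n$-absorbing ideal of $R$; (b) $I$ is a weakly $n$-absorbing ideal of $R$; (c) for every integer $t$ with $0\leq t\leq n$, all ideals $I_1,\dots,I_t$ of $R$ and all elements $x_1,\dots,x_{n-t}\in R$ such that $x_1\cdots x_{n-t}I_1\cdots I_t\not\subseteq I$, one has $$(I:_R x_1\cdots x_{n-t}I_1\cdots I_t)=\Big[\bigcup_{i=1}^{n-t}(I:_R x_1\cdots\widehat{x_i}\cdots x_{n-t}I_1\cdots I_t)\Big]\cup\Big[\bigcup_{j=1}^{t}(I:_R x_1\cdots x_{n-t}I_1\cdots\widehat{I_j}\cdots I_t)\Big]\cup(0:_R x_1\cdots x_{n-t}I_1\cdots I_t);$$ (d) for every integer $t$ with $0\leq t\leq n$, all ideals $I_1,\dots,I_t$ of $R$ and all elements $x_1,\dots,x_{n-t}\in R$ such that $x_1\cdots x_{n-t}I_1\cdots I_t\not\subseteq I$, either $(I:_R x_1\cdots x_{n-t}I_1\cdots I_t)=(I:_R x_1\cdots\widehat{x_i}\cdots x_{n-t}I_1\cdots I_t)$ for some $1\leq i\leq n-t$, or $(I:_R x_1\cdots x_{n-t}I_1\cdots I_t)=(I:_R x_1\cdots x_{n-t}I_1\cdots\widehat{I_j}\cdots I_t)$ for some $1\leq j\leq t$, or $(I:_R x_1\cdots x_{n-t}I_1\cdots I_t)=(0:_R x_1\cdots x_{n-t}I_1\cdots I_t)$.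
   Context: All rings are commutative with $1\neq 0$. A ring $R$ is a $u$-ring if whenever an ideal of $R$ is contained in a finite union of ideals of $R$, it is contained in one of those ideals. A proper ideal $I$ of $R$ is weakly $n$-absorbing if whenever $0\neq a_1\cdots a_{n+1}\in I$ with $a_1,\dots,a_{n+1}\in R$, there are $n$ of the $a_i$'s whose product is in $I$; it is strongly weakly $n$-absorbing if whenever $0\neq I_1\cdots I_{n+1}\subseteq I$ for ideals $I_1,\dots,I_{n+1}$ of $R$, there are $n$ of the $I_i$'s whose product is contained in $I$. For an ideal (or element) $K$, $(I:_R K)=\{r\in R: rK\subseteq I\}$; $x_1\cdots x_{n-t}I_1\cdots I_t$ denotes the ideal product (elements regarded as principal ideals); a hat $\widehat{\ }$ denotes omission of that factor; an empty product is $R$. *)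

theory Defs
  imports Main
begin

text \<open>All rings are commutative with 1 distinct from 0: the ambient ring R is a type
  of class comm_ring_1 (which includes zero_neq_one).\<close>

definition is_ideal :: "'a::comm_ring_1 set \<Rightarrow> bool" where
  "is_ideal I \<longleftrightarrow> 0 \<in> I \<and> (\<forall>a\<in>I. \<forall>b\<in>I. a + b \<in> I) \<and> (\<forall>a\<in>I. -a \<in> I)
     \<and> (\<forall>r a. a \<in> I \<longrightarrow> r * a \<in> I)"

definition ideal_gen :: "'a::comm_ring_1 set \<Rightarrow> 'a set" where
  "ideal_gen S = \<Inter>{J. is_ideal J \<and> S \<subseteq> J}"

definition principal :: "'a::comm_ring_1 \<Rightarrow> 'a set" where
  "principal x = {r * x | r. True}"

definition ideal_prod :: "'a::comm_ring_1 set \<Rightarrow> 'a set \<Rightarrow> 'a set" where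
  "ideal_prod I J = ideal_gen {a * b | a b. a \<in> I \<and> b \<in> J}"

fun ideal_prod_list :: "'a::comm_ring_1 set list \<Rightarrow> 'a set" where
  "ideal_prod_list [] = UNIV"
| "ideal_prod_list (J # Js) = ideal_prod J (ideal_prod_list Js)"

definition colon :: "'a::comm_ring_1 set \<Rightarrow> 'a set \<Rightarrow> 'a set" where
  "colon I K = {r. \<forall>k\<in>K. r * k \<in> I}"

definition omit :: "nat \<Rightarrow> 'b list \<Rightarrow> 'b list" where
  "omit i xs = take i xs @ drop (Suc i) xs"

text \<open>The ideal x_1...x_{n-t} I_1...I_t, elements regarded as principal ideals.\<close>
definition mixed_prod :: "'a::comm_ring_1 list \<Rightarrow> 'a set list \<Rightarrow> 'a set" where
  "mixed_prod xs Is = ideal_prod_list (map principal xs @ Is)"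

definition u_ring :: "'a::comm_ring_1 itself \<Rightarrow> bool" where
  "u_ring _ \<longleftrightarrow> (\<forall>(J::'a set) F. is_ideal J \<and> finite F \<and> (\<forall>K\<in>F. is_ideal K) \<and> J \<subseteq> \<Union>F
      \<longrightarrow> (\<exists>K\<in>F. J \<subseteq> K))"

definition weakly_n_absorbing :: "nat \<Rightarrow> 'a::comm_ring_1 set \<Rightarrow> bool" where
  "weakly_n_absorbing n I \<longleftrightarrow> is_ideal I \<and> I \<noteq> UNIV \<and>
     (\<forall>a :: nat \<Rightarrow> 'a. (\<Prod>i\<le>n. a i) \<noteq> 0 \<and> (\<Prod>i\<le>n. a i) \<in> I
        \<longrightarrow> (\<exists>j\<le>n. (\<Prod>i\<in>{..n} - {j}. a i) \<in> I))"

definition strongly_weakly_n_absorbing :: "nat \<Rightarrow> 'a::comm_ring_1 set \<Rightarrow> bool" where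
  "strongly_weakly_n_absorbing n I \<longleftrightarrow> is_ideal I \<and> I \<noteq> UNIV \<and>
     (\<forall>Js :: 'a set list. length Js = Suc n \<and> (\<forall>J\<in>set Js. is_ideal J)
        \<and> ideal_prod_list Js \<noteq> {0} \<and> ideal_prod_list Js \<subseteq> I
        \<longrightarrow> (\<exists>j<Suc n. ideal_prod_list (omit j Js) \<subseteq> I))"

end

theory Submission
  imports Defs
begin

text \<open>Everything rests on the adjunction \<open>J * M \<subseteq> K \<longleftrightarrow> J \<subseteq> (K : M)\<close>: a product of ideals
  lies in \<open>K\<close> iff any one chosen factor lies in \<open>K\<close> divided by the remaining ones.

  (b) \<Longrightarrow> (a): the factors of a nonzero product \<open>J\<^sub>0 \<cdots> J\<^sub>n \<subseteq> I\<close> are replaced by principal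
  ideals one at a time. If the claim holds whenever \<open>J\<^sub>p\<close> is replaced by \<open>Ra\<close> for any
  \<open>a \<in> J\<^sub>p\<close>, then \<open>J\<^sub>p\<close> is covered by the annihilator of the other factors together with the
  colon ideals of \<open>I\<close> by the products omitting some \<open>J\<^sub>j\<close>, \<open>j \<noteq> p\<close>; in a u-ring \<open>J\<^sub>p\<close> lies in
  one of them, which is exactly the claim for the original product.

  (a) \<Longrightarrow> (c): apply (a) to \<open>Rr \<cdot> x\<^sub>1 \<cdots> I\<^sub>t\<close> for \<open>r\<close> in the colon ideal. (c) \<Longrightarrow> (d) is the
  u-ring property once more, and (d) for \<open>t = 0\<close> gives back (b).\<close>

lemma is_ideal_UNIV: "is_ideal (UNIV :: 'a::comm_ring_1 set)"
  unfolding is_ideal_def by auto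

lemma is_ideal_zero: "is_ideal {0 :: 'a::comm_ring_1}"
  unfolding is_ideal_def by auto

lemma ideal_zero_mem: "is_ideal I \<Longrightarrow> 0 \<in> I"
  unfolding is_ideal_def by auto

lemma ideal_mult_closed: "is_ideal I \<Longrightarrow> a \<in> I \<Longrightarrow> r * a \<in> I"
  unfolding is_ideal_def by auto

lemma is_ideal_ideal_gen: "is_ideal (ideal_gen S)"
  unfolding ideal_gen_def is_ideal_def by auto

lemma is_ideal_ideal_prod_list: "is_ideal (ideal_prod_list L)"
  by (cases L) (auto simp: is_ideal_UNIV ideal_prod_def is_ideal_ideal_gen)

lemma is_ideal_colon: "is_ideal I \<Longrightarrow> is_ideal (colon I X)"
  unfolding is_ideal_def colon_def by (auto simp: distrib_right mult.assoc)

lemma is_ideal_principal: "is_ideal (principal x)"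
  unfolding is_ideal_def principal_def
proof (intro conjI ballI allI impI)
  show "0 \<in> {r * x |r. True}" by (auto intro: exI[of _ 0])
next
  fix a b assume "a \<in> {r * x |r. True}" "b \<in> {r * x |r. True}"
  then show "a + b \<in> {r * x |r. True}" by (auto simp: distrib_right[symmetric])
next
  fix a assume "a \<in> {r * x |r. True}"
  then show "- a \<in> {r * x |r. True}" by (auto intro: exI[of _ "- r" for r])
next
  fix r a assume "a \<in> {r * x |r. True}"
  then show "r * a \<in> {r * x |r. True}" by (auto simp: mult.assoc[symmetric])
qed

lemma principal_mem: "x \<in> principal x"
  unfolding principal_def by (auto intro: exI[of _ 1])

lemma principal_subset_iff: "is_ideal K \<Longrightarrow> principal x \<subseteq> K \<longleftrightarrow> x \<in> K"
  using principal_mem unfolding principal_def by (auto intro: ideal_mult_closed)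

lemma principal_eq_zero_iff: "principal x = {0} \<longleftrightarrow> x = 0"
  using principal_mem unfolding principal_def by auto

lemma ideal_prod_subset_iff:
  assumes "is_ideal K"
  shows "ideal_prod A B \<subseteq> K \<longleftrightarrow> (\<forall>a\<in>A. \<forall>b\<in>B. a * b \<in> K)"
proof
  assume "ideal_prod A B \<subseteq> K"
  moreover have "{a * b | a b. a \<in> A \<and> b \<in> B} \<subseteq> ideal_prod A B"
    unfolding ideal_prod_def ideal_gen_def by auto
  ultimately show "\<forall>a\<in>A. \<forall>b\<in>B. a * b \<in> K" by blast
next
  assume "\<forall>a\<in>A. \<forall>b\<in>B. a * b \<in> K"
  then show "ideal_prod A B \<subseteq> K"
    unfolding ideal_prod_def ideal_gen_def using assms by auto
qed

lemma ideal_prod_principal: "ideal_prod (principal a) (principal b) = principal (a * b)"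
proof
  have "r * a * (s * b) \<in> principal (a * b)" for r s
    unfolding principal_def by (rule CollectI, rule exI[of _ "r * s"]) (simp add: mult_ac)
  then show "ideal_prod (principal a) (principal b) \<subseteq> principal (a * b)"
    unfolding ideal_prod_subset_iff[OF is_ideal_principal] by (auto simp: principal_def)
  have "a * b \<in> ideal_prod (principal a) (principal b)"
    unfolding ideal_prod_def ideal_gen_def using principal_mem by blast
  then show "principal (a * b) \<subseteq> ideal_prod (principal a) (principal b)"
    unfolding ideal_prod_def by (simp add: principal_subset_iff is_ideal_ideal_gen)
qed

lemma ideal_prod_list_map_principal:
  "ideal_prod_list (map principal xs) = principal (prod_list xs)"
proof (induction xs)
  case Nil
  show ?case unfolding principal_def by auto
next
  case (Cons x xs)
  then show ?case by (simp add: ideal_prod_principal)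
qed

lemma colon_subset_swap: "A \<subseteq> colon K B \<longleftrightarrow> B \<subseteq> colon K A"
  unfolding colon_def subset_iff mem_Collect_eq by (metis mult.commute)

lemma colon_antimono: "A \<subseteq> B \<Longrightarrow> colon K B \<subseteq> colon K A"
  unfolding colon_def by auto

lemma mem_colon_principal:
  assumes "is_ideal K"
  shows "r \<in> colon K (principal x) \<longleftrightarrow> r * x \<in> K"
proof
  assume "r \<in> colon K (principal x)"
  then show "r * x \<in> K" using principal_mem unfolding colon_def by blast
next
  assume "r * x \<in> K"
  then have "r * (s * x) \<in> K" for s
    using ideal_mult_closed[OF assms, of "r * x" s] by (simp add: mult.left_commute)
  then show "r \<in> colon K (principal x)" unfolding colon_def principal_def by blast
qed

lemma ideal_prod_list_Cons_subset_iff: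
  "is_ideal K \<Longrightarrow> ideal_prod_list (J # L) \<subseteq> K \<longleftrightarrow> J \<subseteq> colon K (ideal_prod_list L)"
  by (simp add: ideal_prod_subset_iff) (auto simp: colon_def)

lemma colon_ideal_prod_list_Cons:
  assumes "is_ideal K"
  shows "colon K (ideal_prod_list (J # L)) = colon (colon K J) (ideal_prod_list L)"
proof -
  have "r \<in> colon K (ideal_prod_list (J # L)) \<longleftrightarrow> r \<in> colon (colon K J) (ideal_prod_list L)" for r
  proof -
    have "r \<in> colon K (ideal_prod_list (J # L)) \<longleftrightarrow> ideal_prod_list (J # L) \<subseteq> colon K {r}"
      using colon_subset_swap[of "{r}" K] by simp
    also have "\<dots> \<longleftrightarrow> J \<subseteq> colon (colon K {r}) (ideal_prod_list L)"
      by (rule ideal_prod_list_Cons_subset_iff[OF is_ideal_colon[OF assms]])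
    also have "\<dots> \<longleftrightarrow> (\<forall>a\<in>J. \<forall>b\<in>ideal_prod_list L. r * b * a \<in> K)"
      by (auto simp: colon_def mult.commute mult.left_commute)
    also have "\<dots> \<longleftrightarrow> r \<in> colon (colon K J) (ideal_prod_list L)"
      by (auto simp: colon_def)
    finally show ?thesis .
  qed
  then show ?thesis by blast
qed

lemma omit_Cons_0 [simp]: "omit 0 (x # xs) = xs"
  by (simp add: omit_def)

lemma omit_Cons_Suc [simp]: "omit (Suc i) (x # xs) = x # omit i xs"
  by (simp add: omit_def)

lemma length_omit [simp]: "j < length xs \<Longrightarrow> length (omit j xs) = length xs - 1"
  by (simp add: omit_def)

lemma omit_map: "omit j (map f xs) = map f (omit j xs)"
  by (simp add: omit_def take_map drop_map)

lemma omit_update_same [simp]: "omit p (L[p := X]) = omit p L"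
  by (simp add: omit_def)

lemma ideal_prod_list_update_subset_iff:
  assumes "is_ideal K" "q < length M"
  shows "ideal_prod_list (M[q := X]) \<subseteq> K \<longleftrightarrow> X \<subseteq> colon K (ideal_prod_list (omit q M))"
  using assms
proof (induction M arbitrary: q K)
  case Nil
  then show ?case by simp
next
  case (Cons J M)
  show ?case
  proof (cases q)
    case 0
    then show ?thesis using ideal_prod_list_Cons_subset_iff[OF Cons.prems(1), of X M] by simp
  next
    case (Suc q')
    have "ideal_prod_list ((J # M)[q := X]) \<subseteq> K
        \<longleftrightarrow> ideal_prod_list (M[q' := X]) \<subseteq> colon K J"
      using Suc ideal_prod_list_Cons_subset_iff[OF Cons.prems(1)] colon_subset_swap by simp
    also have "\<dots> \<longleftrightarrow> X \<subseteq> colon (colon K J) (ideal_prod_list (omit q' M))"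
      using Cons.IH[OF is_ideal_colon[OF Cons.prems(1)]] Cons.prems(2) Suc by simp
    also have "\<dots> \<longleftrightarrow> X \<subseteq> colon K (ideal_prod_list (omit q (J # M)))"
      using Suc colon_ideal_prod_list_Cons[OF Cons.prems(1), of J "omit q' M"] by simp
    finally show ?thesis .
  qed
qed

lemma ideal_prod_list_subset_omit:
  assumes "p < length L"
  shows "ideal_prod_list L \<subseteq> ideal_prod_list (omit p L)"
proof -
  have "L ! p \<subseteq> colon (ideal_prod_list (omit p L)) (ideal_prod_list (omit p L))"
    unfolding colon_def using ideal_mult_closed[OF is_ideal_ideal_prod_list] by blast
  then show ?thesis
    using ideal_prod_list_update_subset_iff[OF is_ideal_ideal_prod_list assms, of "L ! p"] by simp
qed

lemma omit_update_other:
  assumes "j \<noteq> p" "j < length L" "p < length L"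
  shows "\<exists>q<length (omit j L). \<forall>X. omit j (L[p := X]) = (omit j L)[q := X]"
proof -
  define q where "q = (if j < p then p - 1 else p)"
  have "q < length (omit j L)" using assms by (auto simp: q_def)
  moreover have "omit j (L[p := X]) = (omit j L)[q := X]" for X
    by (rule nth_equalityI) (use assms in \<open>auto simp: q_def omit_def nth_append nth_list_update min_def\<close>)
  ultimately show ?thesis by blast
qed

lemma colon_UNIV:
  assumes "is_ideal K"
  shows "colon K UNIV = K"
proof (intro set_eqI iffI)
  fix r assume "r \<in> colon K UNIV"
  then have "r * 1 \<in> K" unfolding colon_def by blast
  then show "r \<in> K" by simp
next
  fix r assume "r \<in> K"
  then have "r * k \<in> K" for k
    using ideal_mult_closed[OF assms, of r k] by (simp only: mult.commute)
  then show "r \<in> colon K UNIV" unfolding colon_def by blast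
qed

lemma colon_ideal_prod_list_update_UNIV:
  assumes "is_ideal K" "q < length M"
  shows "colon K (ideal_prod_list (M[q := UNIV])) = colon K (ideal_prod_list (omit q M))"
proof -
  have "r \<in> colon K (ideal_prod_list (M[q := UNIV])) \<longleftrightarrow> r \<in> colon K (ideal_prod_list (omit q M))" for r
  proof -
    let ?Kr = "colon K {r}"
    have Kr: "is_ideal ?Kr" by (rule is_ideal_colon[OF assms(1)])
    have "r \<in> colon K (ideal_prod_list (M[q := UNIV])) \<longleftrightarrow> ideal_prod_list (M[q := UNIV]) \<subseteq> ?Kr"
      using colon_subset_swap[of "{r}" K] by simp
    also have "\<dots> \<longleftrightarrow> UNIV \<subseteq> colon ?Kr (ideal_prod_list (omit q M))"
      by (rule ideal_prod_list_update_subset_iff[OF Kr assms(2)])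
    also have "\<dots> \<longleftrightarrow> ideal_prod_list (omit q M) \<subseteq> ?Kr"
      using colon_subset_swap[of UNIV ?Kr] colon_UNIV[OF Kr] by simp
    also have "\<dots> \<longleftrightarrow> r \<in> colon K (ideal_prod_list (omit q M))"
      using colon_subset_swap[of "{r}" K] by simp
    finally show ?thesis .
  qed
  then show ?thesis by blast
qed

lemma ideal_prod_list_omit_update_subset_iff:
  assumes "is_ideal K" "j \<noteq> p" "j < length L" "p < length L"
  shows "ideal_prod_list (omit j (L[p := X])) \<subseteq> K
    \<longleftrightarrow> X \<subseteq> colon K (ideal_prod_list (omit j (L[p := UNIV])))"
proof -
  obtain q where q: "q < length (omit j L)" "\<And>X. omit j (L[p := X]) = (omit j L)[q := X]"
    using omit_update_other[OF assms(2-4)] by blast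
  show ?thesis
    by (simp only: q(2) ideal_prod_list_update_subset_iff[OF assms(1) q(1)]
        colon_ideal_prod_list_update_UNIV[OF assms(1) q(1)])
qed

lemma UN_lessThan_add: "(\<Union>i<m + k. g i) = (\<Union>i<m. g i) \<union> (\<Union>j<k. g (m + j :: nat))"
proof
  show "(\<Union>i<m + k. g i) \<subseteq> (\<Union>i<m. g i) \<union> (\<Union>j<k. g (m + j))"
  proof
    fix x assume "x \<in> (\<Union>i<m + k. g i)"
    then obtain i where i: "i < m + k" "x \<in> g i" by blast
    show "x \<in> (\<Union>i<m. g i) \<union> (\<Union>j<k. g (m + j))"
    proof (cases "i < m")
      case False
      then have "x \<in> g (m + (i - m))" "i - m < k" using i by auto
      then show ?thesis by blast
    qed (use i in blast)
  qed
next
  show "(\<Union>i<m. g i) \<union> (\<Union>j<k. g (m + j)) \<subseteq> (\<Union>i<m + k. g i)"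
    by (intro Un_least UN_least UN_upper) auto
qed

lemma UN_omit_append:
  "(\<Union>i<length (A @ B). f (omit i (A @ B)))
    = (\<Union>i<length A. f (omit i A @ B)) \<union> (\<Union>j<length B. f (A @ omit j B))"
proof -
  have "(\<Union>i<length A. f (omit i (A @ B))) = (\<Union>i<length A. f (omit i A @ B))"
    by (rule SUP_cong) (simp_all add: omit_def)
  moreover have "omit (length A + j) (A @ B) = A @ omit j B" for j
    by (simp add: omit_def)
  ultimately show ?thesis by (simp add: UN_lessThan_add)
qed

lemma u_ringD:
  assumes "u_ring TYPE('a::comm_ring_1)" "is_ideal (J :: 'a set)" "finite F"
    "\<And>K. K \<in> F \<Longrightarrow> is_ideal K" "J \<subseteq> \<Union>F"
  shows "\<exists>K\<in>F. J \<subseteq> K"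
  using assms unfolding u_ring_def by blast

lemma u_ring_Union_eq:
  assumes "u_ring TYPE('a::comm_ring_1)" "is_ideal (J :: 'a set)" "finite F"
    "\<And>K. K \<in> F \<Longrightarrow> is_ideal K" "J = \<Union>F"
  shows "\<exists>K\<in>F. J = K"
proof -
  obtain K where "K \<in> F" "J \<subseteq> K" using u_ringD[OF assms(1-4)] assms(5) by blast
  moreover from \<open>K \<in> F\<close> have "K \<subseteq> J" using assms(5) by blast
  ultimately show ?thesis by blast
qed

definition weakly_absorbs :: "'a::comm_ring_1 set \<Rightarrow> 'a set list \<Rightarrow> bool" where
  "weakly_absorbs I Js \<longleftrightarrow> (ideal_prod_list Js \<noteq> {0} \<and> ideal_prod_list Js \<subseteq> I
     \<longrightarrow> (\<exists>j<length Js. ideal_prod_list (omit j Js) \<subseteq> I))"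

lemma strongly_weakly_n_absorbing_iff_weakly_absorbs:
  "strongly_weakly_n_absorbing n I \<longleftrightarrow> is_ideal I \<and> I \<noteq> UNIV
     \<and> (\<forall>Js. length Js = Suc n \<and> (\<forall>J\<in>set Js. is_ideal J) \<longrightarrow> weakly_absorbs I Js)"
  unfolding strongly_weakly_n_absorbing_def weakly_absorbs_def by auto

lemma weakly_absorbs_map_principal:
  assumes "is_ideal I"
  shows "weakly_absorbs I (map principal xs) \<longleftrightarrow>
    (prod_list xs \<noteq> 0 \<and> prod_list xs \<in> I \<longrightarrow> (\<exists>j<length xs. prod_list (omit j xs) \<in> I))"
  unfolding weakly_absorbs_def omit_map ideal_prod_list_map_principal
  by (simp add: principal_eq_zero_iff principal_subset_iff[OF assms])

lemma all_funs_iff_all_lists: "(\<forall>a :: nat \<Rightarrow> 'b. P (map a [0..<n])) \<longleftrightarrow> (\<forall>xs. length xs = n \<longrightarrow> P xs)"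
proof
  assume "\<forall>a. P (map a [0..<n])"
  then show "\<forall>xs. length xs = n \<longrightarrow> P xs" by (metis map_nth)
qed simp

lemma prod_atMost_conv_prod_list: "(\<Prod>i\<le>n. a i) = prod_list (map a [0..<Suc n])"
  using prod.distinct_set_conv_list[of "[0..<Suc n]" a]
  by (simp add: atLeast0LessThan lessThan_Suc_atMost del: upt_Suc)

lemma prod_atMost_remove_conv_prod_list_omit:
  "(\<Prod>i\<in>{..n} - {j}. a i) = prod_list (omit j (map a [0..<Suc n]))"
proof (cases "j \<le> n")
  case True
  then have upt: "omit j [0..<Suc n] = [0..<j] @ [Suc j..<Suc n]"
    by (simp add: omit_def take_upt drop_upt)
  have "{..n} - {j} = set (omit j [0..<Suc n])"
    unfolding upt using True by auto
  moreover have "distinct (omit j [0..<Suc n])"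
    unfolding upt by auto
  ultimately show ?thesis
    by (simp add: prod.distinct_set_conv_list omit_map del: upt_Suc)
next
  case False
  then have "omit j (map a [0..<Suc n]) = map a [0..<Suc n]" "{..n} - {j} = {..n}"
    by (auto simp: omit_def)
  then show ?thesis by (simp add: prod_atMost_conv_prod_list del: upt_Suc)
qed

lemma weakly_n_absorbing_iff_weakly_absorbs_principal:
  "weakly_n_absorbing n I \<longleftrightarrow> is_ideal I \<and> I \<noteq> UNIV
     \<and> (\<forall>xs. length xs = Suc n \<longrightarrow> weakly_absorbs I (map principal xs))"
proof (cases "is_ideal I")
  case True
  then show ?thesis
    using all_funs_iff_all_lists[where
        P = "\<lambda>xs. prod_list xs \<noteq> 0 \<and> prod_list xs \<in> I \<longrightarrow> (\<exists>j\<le>n. prod_list (omit j xs) \<in> I)"]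
    unfolding weakly_n_absorbing_def prod_atMost_conv_prod_list
      prod_atMost_remove_conv_prod_list_omit
    by (simp add: weakly_absorbs_map_principal less_Suc_eq_le del: upt_Suc)
qed (simp add: weakly_n_absorbing_def)

lemma mem_colon_omit_if_weakly_absorbs_principal:
  assumes I: "is_ideal I" and p: "p < length L"
    and sub: "ideal_prod_list L \<subseteq> I" and not_sub: "\<not> ideal_prod_list (omit p L) \<subseteq> I"
    and a: "a \<in> L ! p" "a \<notin> colon {0} (ideal_prod_list (omit p L))"
    and absorbs: "weakly_absorbs I (L[p := principal a])"
  shows "\<exists>j\<in>{..<length L} - {p}. a \<in> colon I (ideal_prod_list (omit j (L[p := UNIV])))"
proof -
  have "L ! p \<subseteq> colon I (ideal_prod_list (omit p L))"
    using sub ideal_prod_list_update_subset_iff[OF I p, of "L ! p"] by simp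
  then have "principal a \<subseteq> colon I (ideal_prod_list (omit p L))"
    using a(1) principal_subset_iff[OF is_ideal_colon[OF I]] by blast
  then have "ideal_prod_list (L[p := principal a]) \<subseteq> I"
    using ideal_prod_list_update_subset_iff[OF I p] by blast
  moreover have "ideal_prod_list (L[p := principal a]) \<noteq> {0}"
    using ideal_prod_list_update_subset_iff[OF is_ideal_zero p, of "principal a"] a(2) principal_mem
    by blast
  ultimately obtain j where j: "j < length L" "ideal_prod_list (omit j (L[p := principal a])) \<subseteq> I"
    using absorbs unfolding weakly_absorbs_def by auto
  moreover have "j \<noteq> p" using j(2) not_sub by auto
  ultimately show ?thesis
    using ideal_prod_list_omit_update_subset_iff[OF I _ _ p] principal_mem by blast
qed

lemma weakly_absorbs_if_principal_at:
  assumes u: "u_ring TYPE('a::comm_ring_1)" and I: "is_ideal (I :: 'a set)"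
    and p: "p < length L" "is_ideal (L ! p)"
    and principal: "\<And>a. a \<in> L ! p \<Longrightarrow> weakly_absorbs I (L[p := principal a])"
  shows "weakly_absorbs I L"
  unfolding weakly_absorbs_def
proof (intro impI)
  assume "ideal_prod_list L \<noteq> {0} \<and> ideal_prod_list L \<subseteq> I"
  then have nonzero: "\<not> ideal_prod_list L \<subseteq> {0}" and sub: "ideal_prod_list L \<subseteq> I"
    using ideal_zero_mem[OF is_ideal_ideal_prod_list] by auto
  show "\<exists>j<length L. ideal_prod_list (omit j L) \<subseteq> I"
  proof (cases "ideal_prod_list (omit p L) \<subseteq> I")
    case True
    with p show ?thesis by blast
  next
    case False
    note not_sub = this
    define Z where "Z = colon {0} (ideal_prod_list (omit p L))"
    define D where "D j = colon I (ideal_prod_list (omit j (L[p := UNIV])))" for j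
    let ?F = "insert Z (D ` ({..<length L} - {p}))"
    have "L ! p \<subseteq> \<Union>?F"
    proof
      fix a assume a: "a \<in> L ! p"
      show "a \<in> \<Union>?F"
      proof (cases "a \<in> Z")
        case False
        then obtain j where "j \<in> {..<length L} - {p}" "a \<in> D j"
          using mem_colon_omit_if_weakly_absorbs_principal[OF I p(1) sub not_sub a _ principal[OF a]]
          unfolding Z_def D_def by blast
        then show ?thesis by blast
      qed simp
    qed
    moreover have "is_ideal K" if "K \<in> ?F" for K
      using that is_ideal_colon[OF I] is_ideal_colon[OF is_ideal_zero] unfolding Z_def D_def by blast
    ultimately obtain K where K: "K \<in> ?F" "L ! p \<subseteq> K"
      using u_ringD[OF u p(2), of ?F] by blast
    show ?thesis
    proof (cases "K = Z")
      case True
      then have "ideal_prod_list L \<subseteq> {0}"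
        using K(2) ideal_prod_list_update_subset_iff[OF is_ideal_zero p(1), of "L ! p"]
        unfolding Z_def by simp
      with nonzero show ?thesis by blast
    next
      case False
      then obtain j where "j \<in> {..<length L} - {p}" "L ! p \<subseteq> D j" using K by blast
      then show ?thesis
        using ideal_prod_list_omit_update_subset_iff[OF I _ _ p(1), of j "L ! p"]
        unfolding D_def by auto
    qed
  qed
qed

lemma weakly_absorbs_principal_append:
  assumes u: "u_ring TYPE('a::comm_ring_1)" and I: "is_ideal (I :: 'a set)"
    and principal: "\<And>xs. length xs = N \<Longrightarrow> weakly_absorbs I (map principal xs)"
  shows "\<forall>J\<in>set Js. is_ideal J \<Longrightarrow> length xs + length Js = N
    \<Longrightarrow> weakly_absorbs I (map principal xs @ Js)"
proof (induction Js arbitrary: xs)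
  case Nil
  then show ?case using principal by simp
next
  case (Cons J Js)
  let ?L = "map principal xs @ J # Js"
  have "weakly_absorbs I (?L[length xs := principal a])" for a
    using Cons.IH[of "xs @ [a]"] Cons.prems by (simp add: list_update_append)
  then show ?case
    using weakly_absorbs_if_principal_at[OF u I, of "length xs" ?L] Cons.prems by (simp add: nth_append)
qed

lemma weakly_imp_strongly_weakly_n_absorbing:
  assumes "u_ring TYPE('a::comm_ring_1)" "weakly_n_absorbing n (I :: 'a set)"
  shows "strongly_weakly_n_absorbing n I"
  using assms weakly_absorbs_principal_append[OF assms(1), of I "Suc n" _ "[]"]
  unfolding weakly_n_absorbing_iff_weakly_absorbs_principal
    strongly_weakly_n_absorbing_iff_weakly_absorbs
  by simp

lemma colon_eq_UN_colon_omit: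
  assumes I: "is_ideal I" and not_sub: "\<not> ideal_prod_list L \<subseteq> I"
    and absorbs: "\<And>r. weakly_absorbs I (principal r # L)"
  shows "colon I (ideal_prod_list L)
    = (\<Union>i<length L. colon I (ideal_prod_list (omit i L))) \<union> colon {0} (ideal_prod_list L)"
proof
  show "colon I (ideal_prod_list L)
    \<subseteq> (\<Union>i<length L. colon I (ideal_prod_list (omit i L))) \<union> colon {0} (ideal_prod_list L)"
  proof
    fix r assume r: "r \<in> colon I (ideal_prod_list L)"
    have Cons_subset: "ideal_prod_list (principal r # M) \<subseteq> K \<longleftrightarrow> r \<in> colon K (ideal_prod_list M)"
      if "is_ideal K" for K M
      by (simp only: ideal_prod_list_Cons_subset_iff[OF that]
          principal_subset_iff[OF is_ideal_colon[OF that]])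
    show "r \<in> (\<Union>i<length L. colon I (ideal_prod_list (omit i L))) \<union> colon {0} (ideal_prod_list L)"
    proof (cases "r \<in> colon {0} (ideal_prod_list L)")
      case False
      then have "ideal_prod_list (principal r # L) \<noteq> {0}"
        using Cons_subset[OF is_ideal_zero] by auto
      moreover have "ideal_prod_list (principal r # L) \<subseteq> I"
        using Cons_subset[OF I] r by blast
      ultimately obtain j where j: "j < Suc (length L)"
        "ideal_prod_list (omit j (principal r # L)) \<subseteq> I"
        using absorbs[of r] unfolding weakly_absorbs_def by auto
      then obtain i where "j = Suc i" using not_sub by (cases j) auto
      then have "i < length L" "r \<in> colon I (ideal_prod_list (omit i L))"
        using j Cons_subset[OF I] by auto
      then show ?thesis by blast
    qed blast
  qed
  have "colon I (ideal_prod_list (omit i L)) \<subseteq> colon I (ideal_prod_list L)" if "i < length L" for i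
    by (rule colon_antimono[OF ideal_prod_list_subset_omit[OF that]])
  moreover have "colon {0} (ideal_prod_list L) \<subseteq> colon I (ideal_prod_list L)"
    unfolding colon_def using ideal_zero_mem[OF I] by auto
  ultimately show "(\<Union>i<length L. colon I (ideal_prod_list (omit i L))) \<union> colon {0} (ideal_prod_list L)
    \<subseteq> colon I (ideal_prod_list L)" by blast
qed

definition colon_eq_union_of_omissions :: "nat \<Rightarrow> 'a::comm_ring_1 set \<Rightarrow> bool" where
  "colon_eq_union_of_omissions n I \<longleftrightarrow>
    (\<forall>t xs Is. t \<le> n \<and> length Is = t \<and> (\<forall>J\<in>set Is. is_ideal J) \<and> length xs = n - t
       \<and> \<not> mixed_prod xs Is \<subseteq> I \<longrightarrow>
       colon I (mixed_prod xs Is) =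
         (\<Union>i<n - t. colon I (mixed_prod (omit i xs) Is))
         \<union> (\<Union>j<t. colon I (mixed_prod xs (omit j Is)))
         \<union> colon {0} (mixed_prod xs Is))"

definition colon_eq_one_of_omissions :: "nat \<Rightarrow> 'a::comm_ring_1 set \<Rightarrow> bool" where
  "colon_eq_one_of_omissions n I \<longleftrightarrow>
    (\<forall>t xs Is. t \<le> n \<and> length Is = t \<and> (\<forall>J\<in>set Is. is_ideal J) \<and> length xs = n - t
       \<and> \<not> mixed_prod xs Is \<subseteq> I \<longrightarrow>
       (\<exists>i<n - t. colon I (mixed_prod xs Is) = colon I (mixed_prod (omit i xs) Is))
       \<or> (\<exists>j<t. colon I (mixed_prod xs Is) = colon I (mixed_prod xs (omit j Is)))
       \<or> colon I (mixed_prod xs Is) = colon {0} (mixed_prod xs Is))"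

lemma strongly_weakly_imp_colon_eq_union:
  assumes "strongly_weakly_n_absorbing n I"
  shows "colon_eq_union_of_omissions n I"
  unfolding colon_eq_union_of_omissions_def
proof (intro allI impI, elim conjE)
  fix t xs Is
  assume "t \<le> n" "length Is = t" "\<forall>J\<in>set Is. is_ideal J" "length xs = n - t"
    and not_sub: "\<not> mixed_prod xs Is \<subseteq> I"
  let ?L = "map principal xs @ Is"
  have I: "is_ideal I"
    and absorbs: "\<forall>Js. length Js = Suc n \<and> (\<forall>J\<in>set Js. is_ideal J) \<longrightarrow> weakly_absorbs I Js"
    using assms unfolding strongly_weakly_n_absorbing_iff_weakly_absorbs by blast+
  have absorbs_L: "weakly_absorbs I (principal r # ?L)" for r
    using \<open>t \<le> n\<close> \<open>length Is = t\<close> \<open>\<forall>J\<in>set Is. is_ideal J\<close> \<open>length xs = n - t\<close>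
    by (intro absorbs[rule_format]) (auto simp: is_ideal_principal)
  have "colon I (ideal_prod_list ?L) = (\<Union>i<length ?L. colon I (ideal_prod_list (omit i ?L)))
    \<union> colon {0} (ideal_prod_list ?L)"
    using colon_eq_UN_colon_omit[OF I _ absorbs_L] not_sub by (simp add: mixed_prod_def)
  then show "colon I (mixed_prod xs Is) =
         (\<Union>i<n - t. colon I (mixed_prod (omit i xs) Is))
         \<union> (\<Union>j<t. colon I (mixed_prod xs (omit j Is)))
         \<union> colon {0} (mixed_prod xs Is)"
    unfolding UN_omit_append[where f = "\<lambda>L. colon I (ideal_prod_list L)"]
    using \<open>length Is = t\<close> \<open>length xs = n - t\<close> by (simp add: mixed_prod_def omit_map)
qed

lemma colon_eq_union_imp_one_of_omissions:
  assumes u: "u_ring TYPE('a::comm_ring_1)" and I: "is_ideal (I :: 'a set)"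
    and union: "colon_eq_union_of_omissions n I"
  shows "colon_eq_one_of_omissions n I"
  unfolding colon_eq_one_of_omissions_def
proof (intro allI impI)
  fix t xs and Is :: "'a set list"
  assume h: "t \<le> n \<and> length Is = t \<and> (\<forall>J\<in>set Is. is_ideal J) \<and> length xs = n - t
    \<and> \<not> mixed_prod xs Is \<subseteq> I"
  define F where "F = (\<lambda>i. colon I (mixed_prod (omit i xs) Is)) ` {..<n - t}
    \<union> (\<lambda>j. colon I (mixed_prod xs (omit j Is))) ` {..<t} \<union> {colon {0} (mixed_prod xs Is)}"
  have "colon I (mixed_prod xs Is) = (\<Union>i<n - t. colon I (mixed_prod (omit i xs) Is))
         \<union> (\<Union>j<t. colon I (mixed_prod xs (omit j Is)))
         \<union> colon {0} (mixed_prod xs Is)"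
    using union[unfolded colon_eq_union_of_omissions_def, rule_format, of t Is xs] h by blast
  then have "colon I (mixed_prod xs Is) = \<Union>F"
    unfolding F_def by (simp add: Un_ac)
  moreover have "finite F" unfolding F_def by simp
  moreover have "is_ideal K" if "K \<in> F" for K
    using that is_ideal_colon[OF I] is_ideal_colon[OF is_ideal_zero] unfolding F_def by blast
  ultimately obtain K where K: "K \<in> F" "colon I (mixed_prod xs Is) = K"
    using u_ring_Union_eq[OF u is_ideal_colon[OF I]] by blast
  from K(1) consider (x) i where "i < n - t" "K = colon I (mixed_prod (omit i xs) Is)"
    | (Is) j where "j < t" "K = colon I (mixed_prod xs (omit j Is))"
    | (zero) "K = colon {0} (mixed_prod xs Is)"
    unfolding F_def by blast
  then show "(\<exists>i<n - t. colon I (mixed_prod xs Is) = colon I (mixed_prod (omit i xs) Is))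
       \<or> (\<exists>j<t. colon I (mixed_prod xs Is) = colon I (mixed_prod xs (omit j Is)))
       \<or> colon I (mixed_prod xs Is) = colon {0} (mixed_prod xs Is)"
    using K(2) by cases blast+
qed

text \<open>Only the case \<open>t = 0\<close> of (d) is needed here.\<close>

lemma colon_eq_one_of_omissions_imp_weakly:
  assumes I: "is_ideal I" "I \<noteq> UNIV" and one: "colon_eq_one_of_omissions n I"
  shows "weakly_n_absorbing n I"
  unfolding weakly_n_absorbing_iff_weakly_absorbs_principal weakly_absorbs_map_principal[OF I(1)]
proof (intro conjI I allI impI)
  fix xs :: "'a list"
  assume "length xs = Suc n" and nz_in: "prod_list xs \<noteq> 0 \<and> prod_list xs \<in> I"
  then obtain x ys where xs: "xs = x # ys" and ys: "length ys = n - 0" by (cases xs) auto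
  have mixed: "mixed_prod zs [] = principal (prod_list zs)" for zs :: "'a list"
    by (simp add: mixed_prod_def ideal_prod_list_map_principal)
  show "\<exists>j<length xs. prod_list (omit j xs) \<in> I"
  proof (cases "prod_list ys \<in> I")
    case True
    then show ?thesis using xs by auto
  next
    case False
    then have "\<not> mixed_prod ys [] \<subseteq> I" using mixed principal_mem by blast
    then have "(\<exists>i<n - 0. colon I (mixed_prod ys []) = colon I (mixed_prod (omit i ys) []))
      \<or> (\<exists>j<0. colon I (mixed_prod ys []) = colon I (mixed_prod ys (omit j [])))
      \<or> colon I (mixed_prod ys []) = colon {0} (mixed_prod ys [])"
      using one[unfolded colon_eq_one_of_omissions_def, rule_format, of 0 "[]" ys] ys by simp
    then have "(\<exists>i<n. colon I (principal (prod_list ys)) = colon I (principal (prod_list (omit i ys))))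
      \<or> colon I (principal (prod_list ys)) = colon {0} (principal (prod_list ys))"
      unfolding mixed by simp
    moreover have "x \<in> colon I (principal (prod_list ys))"
      using nz_in xs by (simp add: mem_colon_principal[OF I(1)])
    moreover have "x \<notin> colon {0} (principal (prod_list ys))"
      using nz_in xs by (simp add: mem_colon_principal[OF is_ideal_zero])
    ultimately obtain i where "i < n" "x \<in> colon I (principal (prod_list (omit i ys)))"
      by auto
    then show ?thesis
      using xs ys by (intro exI[of _ "Suc i"]) (simp add: mem_colon_principal[OF I(1)])
  qed
qed

theorem mainTheorem2:
  fixes I :: "'a::comm_ring_1 set" and n :: nat
  assumes "u_ring TYPE('a)"
    and "0 < n"
    and "is_ideal I" and "I \<noteq> UNIV"
  shows "(strongly_weakly_n_absorbing n I \<longleftrightarrow> weakly_n_absorbing n I)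
    \<and> (weakly_n_absorbing n I \<longleftrightarrow>
        (\<forall>t xs Is. t \<le> n \<and> length Is = t \<and> (\<forall>J\<in>set Is. is_ideal J) \<and> length xs = n - t
           \<and> \<not> mixed_prod xs Is \<subseteq> I \<longrightarrow>
           colon I (mixed_prod xs Is) =
             (\<Union>i<n - t. colon I (mixed_prod (omit i xs) Is))
             \<union> (\<Union>j<t. colon I (mixed_prod xs (omit j Is)))
             \<union> colon {0} (mixed_prod xs Is)))
    \<and> (weakly_n_absorbing n I \<longleftrightarrow>
        (\<forall>t xs Is. t \<le> n \<and> length Is = t \<and> (\<forall>J\<in>set Is. is_ideal J) \<and> length xs = n - t
           \<and> \<not> mixed_prod xs Is \<subseteq> I \<longrightarrow>
           (\<exists>i<n - t. colon I (mixed_prod xs Is) = colon I (mixed_prod (omit i xs) Is))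
           \<or> (\<exists>j<t. colon I (mixed_prod xs Is) = colon I (mixed_prod xs (omit j Is)))
           \<or> colon I (mixed_prod xs Is) = colon {0} (mixed_prod xs Is)))"
proof -
  have "weakly_n_absorbing n I \<Longrightarrow> strongly_weakly_n_absorbing n I"
    using weakly_imp_strongly_weakly_n_absorbing[OF assms(1)] .
  moreover have "strongly_weakly_n_absorbing n I \<Longrightarrow> colon_eq_union_of_omissions n I"
    by (rule strongly_weakly_imp_colon_eq_union)
  moreover have "colon_eq_union_of_omissions n I \<Longrightarrow> colon_eq_one_of_omissions n I"
    by (rule colon_eq_union_imp_one_of_omissions[OF assms(1,3)])
  moreover have "colon_eq_one_of_omissions n I \<Longrightarrow> weakly_n_absorbing n I"
    by (rule colon_eq_one_of_omissions_imp_weakly[OF assms(3,4)])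
  ultimately show ?thesis
    unfolding colon_eq_union_of_omissions_def[symmetric] colon_eq_one_of_omissions_def[symmetric]
    by blast
qed

end
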